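(* Let $\sigma$ be a proper schedule and $\sigma'$ the intermediate schedule obtained from $\sigma$ by an admissible swap at step $j^*\in J$ between machines $M_h$ and $M_i$. Then $C_j(\sigma')\le C_{j^*}(\sigma)$ for all $j\in J_H\cup J_I$.
   Context: Jobs $J=\{1,\dots,n\}$, job $j$ with positive integer processing time $p_j$, are scheduled non-preemptively on $m$ identical machines $M_1,\dots,M_m$; $p_{\max}=\max_j p_j$, $P(X)=\sum_{j\in X}p_j$. A proper schedule $\sigma$ is a partition $J=J_1(\sigma)\cup\dots\cup J_m(\sigma)$, the jobs of $J_i(\sigma)$ processed on $M_i$ consecutively from time $0$ without idle time in increasing index order; $C_j(\sigma)$ is the completion time of $j$. $J_j=\{1,\dots,j\}$, $J_{i,j}(\sigma)=J_i(\sigma)\cap J_j$, $\Delta_{h,i,j}(\sigma)=P(J_{h,j}(\sigma))-P(J_{i,j}(\sigma))$. The swap: admissible for proper $\sigma$ at step $j^*$ with machines $M_h,M_i$ if $j^*\in J_h(\sigma)$, $|J_i(\sigma)\setminus J_{i,j^*}(\sigma)|\ge 2p_{\max}$, and $\Delta_{h,i,j^*}(\sigma)\ge 4p_{\max}^2$. Let $J_I$ be the first (smallest-index) $2p_{\max}$ jobs of $J_i(\sigma)\setminus J_{i,j^*}(\sigma)$ and $J_H$ the last (largest-index) $2p_{\max}$ jobs of $J_{h,j^*}(\sigma)$; choose non-empty $J_{H'}\subseteq J_H$, $J_{I'}\subseteq J_I$ with $P(J_{H'})=P(J_{I'})$. The intermediate schedule $\sigma'$: on $M_h$ the time interval occupied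 by $J_H$ in $\sigma$ is filled by $J_H\setminus J_{H'}$ then $J_{I'}$; on $M_i$ the interval occupied by $J_I$ is filled by $J_{H'}$ then $J_I\setminus J_{I'}$ (each group in its order in $\sigma$); all other jobs keep their positions. *)

theory Defs
  imports Main
begin

(* Jobs are 1..n, machines are 1..m, processing times p :: nat => nat.
   A proper schedule is given by its machine sets Js i = J_i(sigma). *)

definition P :: "(nat \<Rightarrow> nat) \<Rightarrow> nat set \<Rightarrow> nat" where
  "P p X = (\<Sum>j\<in>X. p j)"

definition pmax :: "nat \<Rightarrow> (nat \<Rightarrow> nat) \<Rightarrow> nat" where
  "pmax n p = Max (p ` {1..n})"

definition proper :: "nat \<Rightarrow> nat \<Rightarrow> (nat \<Rightarrow> nat set) \<Rightarrow> bool" where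
  "proper n m Js \<longleftrightarrow>
     (\<forall>i\<in>{1..m}. Js i \<subseteq> {1..n}) \<and> (\<Union>i\<in>{1..m}. Js i) = {1..n} \<and>
     (\<forall>i\<in>{1..m}. \<forall>k\<in>{1..m}. i \<noteq> k \<longrightarrow> Js i \<inter> Js k = {})"

definition seq :: "(nat \<Rightarrow> nat set) \<Rightarrow> nat \<Rightarrow> nat list" where
  "seq Js i = sorted_list_of_set (Js i)"

definition ctime_list :: "(nat \<Rightarrow> nat) \<Rightarrow> nat list \<Rightarrow> nat \<Rightarrow> nat" where
  "ctime_list p xs j = sum_list (map p (takeWhile (\<lambda>k. k \<noteq> j) xs)) + p j"

definition ctime :: "(nat \<Rightarrow> nat) \<Rightarrow> nat \<Rightarrow> (nat \<Rightarrow> nat list) \<Rightarrow> nat \<Rightarrow> nat" where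
  "ctime p m S j = ctime_list p (S (THE i. i \<in> {1..m} \<and> j \<in> set (S i))) j"

definition Jij :: "(nat \<Rightarrow> nat set) \<Rightarrow> nat \<Rightarrow> nat \<Rightarrow> nat set" where
  "Jij Js i j = Js i \<inter> {1..j}"

definition Delta :: "(nat \<Rightarrow> nat) \<Rightarrow> (nat \<Rightarrow> nat set) \<Rightarrow> nat \<Rightarrow> nat \<Rightarrow> nat \<Rightarrow> int" where
  "Delta p Js h i j = int (P p (Jij Js h j)) - int (P p (Jij Js i j))"

definition admissible_swap ::
  "nat \<Rightarrow> nat \<Rightarrow> (nat \<Rightarrow> nat) \<Rightarrow> (nat \<Rightarrow> nat set) \<Rightarrow> nat \<Rightarrow> nat \<Rightarrow> nat \<Rightarrow> bool" where
  "admissible_swap n m p Js jst h i \<longleftrightarrow>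
     proper n m Js \<and> h \<in> {1..m} \<and> i \<in> {1..m} \<and> jst \<in> Js h \<and>
     card (Js i - Jij Js i jst) \<ge> 2 * pmax n p \<and>
     Delta p Js h i jst \<ge> 4 * int (pmax n p) ^ 2"

definition JI_list :: "nat \<Rightarrow> (nat \<Rightarrow> nat) \<Rightarrow> (nat \<Rightarrow> nat set) \<Rightarrow> nat \<Rightarrow> nat \<Rightarrow> nat list" where
  "JI_list n p Js jst i = take (2 * pmax n p) (sorted_list_of_set (Js i - Jij Js i jst))"

definition JH_list :: "nat \<Rightarrow> (nat \<Rightarrow> nat) \<Rightarrow> (nat \<Rightarrow> nat set) \<Rightarrow> nat \<Rightarrow> nat \<Rightarrow> nat list" where
  "JH_list n p Js jst h =
     drop (card (Jij Js h jst) - 2 * pmax n p) (sorted_list_of_set (Jij Js h jst))"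

(* In sigma, machine h runs
     (jobs of J_{h,jst} before J_H) @ J_H @ (jobs of J_h after jst)
   and machine i runs
     J_{i,jst} @ J_I @ (remaining jobs of J_i after J_I).
   The block J_H is replaced by (J_H \ J_H') @ J_I', the block J_I by J_H' @ (J_I \ J_I');
   all other jobs keep their positions (both blocks have unchanged total length). *)
definition intermediate ::
  "nat \<Rightarrow> (nat \<Rightarrow> nat) \<Rightarrow> (nat \<Rightarrow> nat set) \<Rightarrow> nat \<Rightarrow> nat \<Rightarrow> nat \<Rightarrow> nat set \<Rightarrow> nat set
     \<Rightarrow> (nat \<Rightarrow> nat list)" where
  "intermediate n p Js jst h i H' I' =
     (let JH = JH_list n p Js jst h; JI = JI_list n p Js jst i;
          Ah = take (card (Jij Js h jst) - 2 * pmax n p) (sorted_list_of_set (Jij Js h jst));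
          Bh = sorted_list_of_set (Js h - Jij Js h jst);
          Ai = sorted_list_of_set (Jij Js i jst);
          Bi = drop (2 * pmax n p) (sorted_list_of_set (Js i - Jij Js i jst))
      in (seq Js)(h := Ah @ filter (\<lambda>k. k \<notin> H') JH @ filter (\<lambda>k. k \<in> I') JI @ Bh,
                  i := Ai @ filter (\<lambda>k. k \<in> H') JH @ filter (\<lambda>k. k \<notin> I') JI @ Bi))"

end

theory Submission
  imports Defs
begin

(* On M_h the block J_H is refilled by (J_H - J_H') @ J_I', which has the same total length
   because P(J_H') = P(J_I'); hence all of it is finished by the end of J_H, which is
   C_j*(sigma) = P(J_{h,j*}).  On M_i the refilled block J_H' @ (J_I - J_I') has length
   P(J_I) <= 2 p_max^2 and is preceded by J_{i,j*}, so it ends by P(J_{i,j*}) + 2 p_max^2,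
   which is at most P(J_{h,j*}) because Delta_{h,i,j*} >= 4 p_max^2.  Since the exchanged machine sets still form a
   partition, each of these jobs runs on exactly one machine of sigma'. *)

lemma ctime_list_append_le:
  "j \<in> set xs \<Longrightarrow> ctime_list p (xs @ ys) j \<le> sum_list (map p xs)"
  by (induction xs) (auto simp: ctime_list_def)

lemma ctime_list_sorted:
  "sorted_wrt (<) xs \<Longrightarrow> j \<in> set xs \<Longrightarrow> ctime_list p xs j = sum p {k \<in> set xs. k \<le> j}"
proof (induction xs)
  case Nil
  then show ?case by simp
next
  case (Cons x xs)
  show ?case
  proof (cases "x = j")
    case True
    then have "{k \<in> set (x # xs). k \<le> j} = {j}" using Cons.prems by auto
    then show ?thesis using True by (simp add: ctime_list_def)
  next
    case False
    then have j: "j \<in> set xs" "x < j" using Cons.prems by auto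
    have "{k \<in> set (x # xs). k \<le> j} = insert x {k \<in> set xs. k \<le> j}" using j by auto
    moreover have "x \<notin> set xs" using Cons.prems by auto
    ultimately show ?thesis using Cons j False by (simp add: ctime_list_def)
  qed
qed

lemma ctime_eq_ctime_list:
  assumes "proper n m Js" and "\<forall>k\<in>{1..m}. set (S k) = Js k"
    and "k \<in> {1..m}" and "j \<in> set (S k)"
  shows "ctime p m S j = ctime_list p (S k) j"
proof -
  have "(THE k'. k' \<in> {1..m} \<and> j \<in> set (S k')) = k"
  proof (rule the_equality)
    fix k' assume k': "k' \<in> {1..m} \<and> j \<in> set (S k')"
    then have "j \<in> Js k' \<inter> Js k" using assms(2-4) by auto
    then show "k' = k" using assms(1,3) k' unfolding proper_def by blast
  qed (use assms in auto)
  then show ?thesis by (simp add: ctime_def)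
qed

lemma machine_set_subset: "proper n m Js \<Longrightarrow> k \<in> {1..m} \<Longrightarrow> Js k \<subseteq> {1..n}"
  unfolding proper_def by blast

lemma finite_machine_set: "proper n m Js \<Longrightarrow> k \<in> {1..m} \<Longrightarrow> finite (Js k)"
  by (meson machine_set_subset finite_atLeastAtMost finite_subset)

lemma ctime_seq:
  assumes "proper n m Js" and "k \<in> {1..m}" and "j \<in> Js k"
  shows "ctime p m (seq Js) j = P p (Jij Js k j)"
proof -
  have fin: "finite (Js k)" using assms finite_machine_set by blast
  have "\<forall>k'\<in>{1..m}. set (seq Js k') = Js k'"
    using finite_machine_set[OF assms(1)] by (simp add: seq_def)
  then have "ctime p m (seq Js) j = ctime_list p (seq Js k) j"
    using assms(2,3) by (intro ctime_eq_ctime_list[OF assms(1)]) auto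
  also have "\<dots> = sum p {k' \<in> Js k. k' \<le> j}"
    using fin assms(3) by (simp add: seq_def ctime_list_sorted)
  also have "{k' \<in> Js k. k' \<le> j} = Jij Js k j"
    using machine_set_subset[OF assms(1,2)] unfolding Jij_def by auto
  finally show ?thesis by (simp add: P_def)
qed

lemma p_le_pmax: "j \<in> {1..n} \<Longrightarrow> p j \<le> pmax n p"
  unfolding pmax_def by simp

lemma proper_exchange:
  assumes "proper n m Js" and "h \<in> {1..m}" and "i \<in> {1..m}" and "h \<noteq> i"
    and "H' \<subseteq> Js h" and "I' \<subseteq> Js i"
  shows "proper n m (Js(h := Js h - H' \<union> I', i := Js i - I' \<union> H'))"
    (is "proper n m ?Js'")
proof -
  have sub: "\<forall>k\<in>{1..m}. Js k \<subseteq> {1..n}" and cover: "(\<Union>k\<in>{1..m}. Js k) = {1..n}"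
    and disj: "\<forall>k\<in>{1..m}. \<forall>k'\<in>{1..m}. k \<noteq> k' \<longrightarrow> Js k \<inter> Js k' = {}"
    using assms(1) unfolding proper_def by blast+
  have hi: "Js h \<inter> Js i = {}" using disj assms(2-4) by blast
  have exchanged: "?Js' h \<union> ?Js' i = Js h \<union> Js i" "?Js' h \<inter> ?Js' i = {}"
    using assms(4-6) hi by auto
  have others: "?Js' k = Js k" "Js k \<inter> (Js h \<union> Js i) = {}"
    if "k \<in> {1..m}" "k \<notin> {h, i}" for k
  proof -
    show "?Js' k = Js k" using that by simp
    show "Js k \<inter> (Js h \<union> Js i) = {}" using disj that assms(2,3) by blast
  qed
  have in_hi: "?Js' k \<subseteq> Js h \<union> Js i" if "k \<in> {h, i}" for k
    using that exchanged(1) by blast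
  have "?Js' k \<subseteq> {1..n}" if "k \<in> {1..m}" for k
  proof (cases "k \<in> {h, i}")
    case True
    then show ?thesis using in_hi sub assms(2,3) by blast
  next
    case False
    then show ?thesis using others(1) sub that by simp
  qed
  moreover have "(\<Union>k\<in>{1..m}. ?Js' k) = {1..n}"
  proof -
    have "(\<Union>k\<in>{1..m}. ?Js' k) = ?Js' h \<union> ?Js' i \<union> (\<Union>k\<in>{1..m} - {h, i}. ?Js' k)"
      using assms(2,3) by blast
    also have "\<dots> = (\<Union>k\<in>{1..m}. Js k)"
      using exchanged(1) others(1) assms(2,3) by auto
    finally show ?thesis using cover by simp
  qed
  moreover have "?Js' k \<inter> ?Js' k' = {}" if "k \<in> {1..m}" "k' \<in> {1..m}" "k \<noteq> k'" for k k'
  proof -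
    consider "k \<in> {h, i}" "k' \<in> {h, i}" | "k \<in> {h, i}" "k' \<notin> {h, i}"
      | "k \<notin> {h, i}" "k' \<in> {h, i}" | "k \<notin> {h, i}" "k' \<notin> {h, i}" by blast
    then show ?thesis
    proof cases
      case 1
      then show ?thesis using exchanged(2) \<open>k \<noteq> k'\<close> by (auto simp: Int_commute)
    next
      case 2
      then show ?thesis using in_hi[of k] others[of k'] that by auto
    next
      case 3
      then show ?thesis using in_hi[of k'] others[of k] that by auto
    next
      case 4
      then show ?thesis using others(1) disj that by simp
    qed
  qed
  ultimately show ?thesis unfolding proper_def by (simp add: ball_simps)
qed

lemma sum_list_filter_mem_distinct:
  "distinct xs \<Longrightarrow> A \<subseteq> set xs \<Longrightarrow> sum_list (map f (filter (\<lambda>x. x \<in> A) xs)) = sum f A"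
proof -
  assume "distinct xs" and "A \<subseteq> set xs"
  then have "set (filter (\<lambda>x. x \<in> A) xs) = A" by auto
  then show ?thesis using \<open>distinct xs\<close> by (metis distinct_filter sum_list_distinct_conv_sum_set)
qed

lemma sum_list_map_filter_partition:
  "sum_list (map f (filter Q xs)) + sum_list (map f (filter (\<lambda>x. \<not> Q x) xs)) = sum_list (map f xs)"
  for f :: "'a \<Rightarrow> 'b :: comm_monoid_add"
  by (induction xs) (simp_all add: ac_simps)


locale admissible_swap_step =
  fixes n m :: nat and p :: "nat \<Rightarrow> nat" and Js :: "nat \<Rightarrow> nat set"
    and jst h i :: nat and H' I' :: "nat set"
  assumes pos: "\<forall>j\<in>{1..n}. p j > 0"
    and adm: "admissible_swap n m p Js jst h i"
    and H'_sub: "H' \<subseteq> set (JH_list n p Js jst h)"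
    and I'_sub: "I' \<subseteq> set (JI_list n p Js jst i)"
    and eqP: "P p H' = P p I'"
begin

lemma proper_Js: "proper n m Js"
  and h_mem: "h \<in> {1..m}" and i_mem: "i \<in> {1..m}" and jst_mem: "jst \<in> Js h"
  and Delta_ge: "Delta p Js h i jst \<ge> 4 * int (pmax n p) ^ 2"
  using adm unfolding admissible_swap_def by auto

lemma h_ne_i: "h \<noteq> i"
proof
  assume "h = i"
  then have "pmax n p = 0" using Delta_ge by (simp add: Delta_def)
  moreover have "jst \<in> {1..n}" using machine_set_subset[OF proper_Js h_mem] jst_mem by blast
  ultimately show False using pos p_le_pmax[of jst n p] by fastforce
qed

definition head_h :: "nat list" where
  "head_h = take (card (Jij Js h jst) - 2 * pmax n p) (sorted_list_of_set (Jij Js h jst))"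

definition tail_h :: "nat list" where
  "tail_h = sorted_list_of_set (Js h - Jij Js h jst)"

definition head_i :: "nat list" where
  "head_i = sorted_list_of_set (Jij Js i jst)"

definition tail_i :: "nat list" where
  "tail_i = drop (2 * pmax n p) (sorted_list_of_set (Js i - Jij Js i jst))"

definition block_h :: "nat list" where
  "block_h = filter (\<lambda>k. k \<notin> H') (JH_list n p Js jst h) @ filter (\<lambda>k. k \<in> I') (JI_list n p Js jst i)"

definition block_i :: "nat list" where
  "block_i = filter (\<lambda>k. k \<in> H') (JH_list n p Js jst h) @ filter (\<lambda>k. k \<notin> I') (JI_list n p Js jst i)"

lemma intermediate_at_h: "intermediate n p Js jst h i H' I' h = head_h @ block_h @ tail_h"
  using h_ne_i
  by (simp add: intermediate_def Let_def head_h_def block_h_def tail_h_def)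

lemma intermediate_at_i: "intermediate n p Js jst h i H' I' i = head_i @ block_i @ tail_i"
  by (simp add: intermediate_def Let_def head_i_def block_i_def tail_i_def)

lemma intermediate_at_other: "k \<notin> {h, i} \<Longrightarrow> intermediate n p Js jst h i H' I' k = seq Js k"
  by (simp add: intermediate_def Let_def)

lemma finite_Jij: "k \<in> {1..m} \<Longrightarrow> finite (Jij Js k jst)"
  using finite_machine_set[OF proper_Js] by (simp add: Jij_def)

lemma head_h_append_JH: "head_h @ JH_list n p Js jst h = sorted_list_of_set (Jij Js h jst)"
  by (simp add: head_h_def JH_list_def)

lemma JI_append_tail_i: "JI_list n p Js jst i @ tail_i = sorted_list_of_set (Js i - Jij Js i jst)"
  by (simp add: tail_i_def JI_list_def)

lemma distinct_head_h_JH: "distinct (head_h @ JH_list n p Js jst h)"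
  by (simp only: head_h_append_JH distinct_sorted_list_of_set)

lemma distinct_JI_tail_i: "distinct (JI_list n p Js jst i @ tail_i)"
  by (simp only: JI_append_tail_i distinct_sorted_list_of_set)

lemma set_head_h_JH: "set head_h \<union> set (JH_list n p Js jst h) = Jij Js h jst"
  using head_h_append_JH finite_Jij[OF h_mem] by (metis set_append set_sorted_list_of_set)

lemma set_JI_tail_i: "set (JI_list n p Js jst i) \<union> set tail_i = Js i - Jij Js i jst"
  using JI_append_tail_i finite_machine_set[OF proper_Js i_mem]
  by (metis finite_Diff set_append set_sorted_list_of_set)

abbreviation exchanged_sets :: "nat \<Rightarrow> nat set" where
  "exchanged_sets \<equiv> Js(h := Js h - H' \<union> I', i := Js i - I' \<union> H')"

lemma H'_sub_Jij: "H' \<subseteq> Jij Js h jst" and I'_sub_Js: "I' \<subseteq> Js i - Jij Js i jst"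
  using H'_sub I'_sub set_head_h_JH set_JI_tail_i by blast+

lemma set_intermediate:
  assumes "k \<in> {1..m}"
  shows "set (intermediate n p Js jst h i H' I' k) = exchanged_sets k"
proof -
  have "set head_h \<inter> H' = {}" using distinct_head_h_JH H'_sub by auto
  then have "set (head_h @ block_h @ tail_h) = Js h - H' \<union> I'"
    using set_head_h_JH H'_sub_Jij I'_sub finite_machine_set[OF proper_Js h_mem]
    unfolding block_h_def tail_h_def by (auto simp: Jij_def)
  moreover have "set tail_i \<inter> I' = {}" using distinct_JI_tail_i I'_sub by auto
  then have "set (head_i @ block_i @ tail_i) = Js i - I' \<union> H'"
    using set_JI_tail_i I'_sub_Js H'_sub finite_Jij[OF i_mem]
    unfolding block_i_def head_i_def by (auto simp: Jij_def)
  ultimately show ?thesis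
    using assms h_ne_i finite_machine_set[OF proper_Js]
    by (auto simp: intermediate_at_h intermediate_at_i intermediate_at_other seq_def)
qed

lemma proper_exchanged_sets: "proper n m exchanged_sets"
  using proper_exchange[OF proper_Js h_mem i_mem h_ne_i] H'_sub_Jij I'_sub_Js by (auto simp: Jij_def)

lemma sum_head_block_h: "sum_list (map p (head_h @ block_h)) = P p (Jij Js h jst)"
proof -
  let ?JH = "JH_list n p Js jst h" and ?JI = "JI_list n p Js jst i"
  have "sum_list (map p (filter (\<lambda>k. k \<in> I') ?JI)) = P p I'"
    using distinct_JI_tail_i I'_sub by (simp add: sum_list_filter_mem_distinct P_def)
  also have "\<dots> = sum_list (map p (filter (\<lambda>k. k \<in> H') ?JH))"
    using distinct_head_h_JH H'_sub eqP by (simp add: sum_list_filter_mem_distinct P_def)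
  finally have "sum_list (map p block_h) = sum_list (map p ?JH)"
    using sum_list_map_filter_partition[of p "\<lambda>k. k \<in> H'" ?JH] by (simp add: block_h_def)
  then have "sum_list (map p (head_h @ block_h)) = sum_list (map p (head_h @ ?JH))"
    by simp
  also have "\<dots> = P p (Jij Js h jst)"
    using finite_Jij[OF h_mem] by (simp only: head_h_append_JH sum_list_distinct_conv_sum_set
        distinct_sorted_list_of_set set_sorted_list_of_set P_def)
  finally show ?thesis .
qed

lemma sum_block_i_le: "sum_list (map p block_i) \<le> 2 * pmax n p * pmax n p"
proof -
  let ?JH = "JH_list n p Js jst h" and ?JI = "JI_list n p Js jst i"
  have "sum_list (map p (filter (\<lambda>k. k \<in> H') ?JH)) = P p H'"
    using distinct_head_h_JH H'_sub by (simp add: sum_list_filter_mem_distinct P_def)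
  also have "\<dots> = sum_list (map p (filter (\<lambda>k. k \<in> I') ?JI))"
    using distinct_JI_tail_i I'_sub eqP by (simp add: sum_list_filter_mem_distinct P_def)
  finally have "sum_list (map p block_i) = sum_list (map p ?JI)"
    using sum_list_map_filter_partition[of p "\<lambda>k. k \<in> I'" ?JI] by (simp add: block_i_def)
  also have "\<dots> \<le> sum_list (map (\<lambda>_. pmax n p) ?JI)"
  proof (rule sum_list_mono)
    fix k assume "k \<in> set ?JI"
    then have "k \<in> {1..n}" using set_JI_tail_i machine_set_subset[OF proper_Js i_mem] by blast
    then show "p k \<le> pmax n p" by (rule p_le_pmax)
  qed
  also have "\<dots> \<le> 2 * pmax n p * pmax n p"
    by (simp add: sum_list_triv JI_list_def)
  finally show ?thesis .
qed

lemma sum_head_block_i: "sum_list (map p (head_i @ block_i)) \<le> P p (Jij Js h jst)"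
proof -
  have "sum_list (map p head_i) = P p (Jij Js i jst)"
    using finite_Jij[OF i_mem] by (simp add: head_i_def sum_list_distinct_conv_sum_set P_def)
  moreover have "int (P p (Jij Js i jst) + 4 * pmax n p ^ 2) \<le> int (P p (Jij Js h jst))"
    using Delta_ge unfolding Delta_def by simp
  ultimately show ?thesis using sum_block_i_le unfolding of_nat_le_iff by (simp add: power2_eq_square)
qed

lemma ctime_intermediate_le:
  assumes "j \<in> set (JH_list n p Js jst h) \<union> set (JI_list n p Js jst i)"
  shows "ctime p m (intermediate n p Js jst h i H' I') j \<le> ctime p m (seq Js) jst"
proof -
  let ?\<sigma>' = "intermediate n p Js jst h i H' I'"
  have ctime_\<sigma>': "ctime p m ?\<sigma>' j = ctime_list p (?\<sigma>' k) j"
    if "k \<in> {1..m}" and "j \<in> set (?\<sigma>' k)" for k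
    using set_intermediate that by (intro ctime_eq_ctime_list[OF proper_exchanged_sets]) auto
  have ctime_jst: "ctime p m (seq Js) jst = P p (Jij Js h jst)"
    using ctime_seq[OF proper_Js h_mem jst_mem] .
  from assms consider "j \<in> set block_h" | "j \<in> set block_i"
    unfolding block_h_def block_i_def by auto
  then show ?thesis
  proof cases
    case 1
    then have "ctime p m ?\<sigma>' j \<le> sum_list (map p (head_h @ block_h))"
      using ctime_\<sigma>'[OF h_mem] ctime_list_append_le[of j "head_h @ block_h" p tail_h]
      by (simp add: intermediate_at_h)
    then show ?thesis using sum_head_block_h ctime_jst by simp
  next
    case 2
    then have "ctime p m ?\<sigma>' j \<le> sum_list (map p (head_i @ block_i))"
      using ctime_\<sigma>'[OF i_mem] ctime_list_append_le[of j "head_i @ block_i" p tail_i]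
      by (simp add: intermediate_at_i)
    then show ?thesis using sum_head_block_i ctime_jst by simp
  qed
qed

end

theorem lemma6:
  fixes n m :: nat and p :: "nat \<Rightarrow> nat" and Js :: "nat \<Rightarrow> nat set"
    and jst h i :: nat and H' I' :: "nat set"
  assumes pos: "\<forall>j\<in>{1..n}. p j > 0"
    and adm: "admissible_swap n m p Js jst h i"
    and H'sub: "H' \<subseteq> set (JH_list n p Js jst h)" and H'ne: "H' \<noteq> {}"
    and I'sub: "I' \<subseteq> set (JI_list n p Js jst i)" and I'ne: "I' \<noteq> {}"
    and eqP: "P p H' = P p I'"
  shows "\<forall>j \<in> set (JH_list n p Js jst h) \<union> set (JI_list n p Js jst i).
           ctime p m (intermediate n p Js jst h i H' I') j \<le> ctime p m (seq Js) jst"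
proof -
  interpret admissible_swap_step n m p Js jst h i H' I'
    using pos adm H'sub I'sub eqP by unfold_locales
  show ?thesis using ctime_intermediate_le by blast
qed

end
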